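(* Let $r\ge 2$ and $2\le s\le r$ be integers and let $H$ be a linear $r$-uniform hypergraph. Then \[ q(H)\le \frac{1}{\binom{r-1}{s-1}}\,q(\partial_s H). \] In particular, $(r-1)\,q(H)\le q(\partial H)$, where $q(\partial H)$ is the largest eigenvalue of the signless Laplacian matrix of the graph $\partial H$.
   Context: An $r$-uniform hypergraph ($r$-graph) $H$ has a finite vertex set $V(H)$ and a set $E(H)$ of $r$-element subsets of $V(H)$. It is linear if any two distinct edges share at most one vertex. $d_H(v)$ is the number of edges containing $v$. For an $r$-graph $H$ on $n$ vertices, its signless Laplacian spectral radius is \[ q(H)=\max_{\mathbf{x}\in\mathbb{R}^n,\ \|\mathbf{x}\|_r=1}\Big(\sum_{v\in V(H)}d_H(v)x_v^r + r\sum_{e\in E(H)}\prod_{v\in e}x_v\Big), \] where $\|\mathbf{x}\|_r=(\sum_v|x_v|^r)^{1/r}$. The $s$-shadow $\partial_s H$ is the $s$-graph on $V(H)$ whose edges are all $s$-subsets contained in some edge of $H$; $\partial H=\partial_2 H$ (a graph, for which $q$ coincides with the largest eigenvalue of $D+A$). *)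

theory Defs
  imports Complex_Main
begin

definition uniform_hypergraph :: "nat \<Rightarrow> 'a set \<Rightarrow> 'a set set \<Rightarrow> bool" where
  "uniform_hypergraph r V E \<longleftrightarrow> finite V \<and> (\<forall>e\<in>E. e \<subseteq> V \<and> card e = r)"

definition linear_hypergraph :: "'a set set \<Rightarrow> bool" where
  "linear_hypergraph E \<longleftrightarrow> (\<forall>e\<in>E. \<forall>f\<in>E. e \<noteq> f \<longrightarrow> card (e \<inter> f) \<le> 1)"

definition hdegree :: "'a set set \<Rightarrow> 'a \<Rightarrow> nat" where
  "hdegree E v = card {e\<in>E. v \<in> e}"

text \<open>The s-shadow: all s-subsets contained in some edge (vertex set unchanged).\<close>
definition shadow :: "nat \<Rightarrow> 'a set set \<Rightarrow> 'a set set" where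
  "shadow s E = {S. card S = s \<and> (\<exists>e\<in>E. S \<subseteq> e)}"

definition rnorm :: "nat \<Rightarrow> 'a set \<Rightarrow> ('a \<Rightarrow> real) \<Rightarrow> real" where
  "rnorm r V x = root r (\<Sum>v\<in>V. \<bar>x v\<bar> ^ r)"

definition slap_form :: "nat \<Rightarrow> 'a set \<Rightarrow> 'a set set \<Rightarrow> ('a \<Rightarrow> real) \<Rightarrow> real" where
  "slap_form r V E x = (\<Sum>v\<in>V. real (hdegree E v) * x v ^ r) + real r * (\<Sum>e\<in>E. \<Prod>v\<in>e. x v)"

text \<open>Signless Laplacian spectral radius (the maximum exists by compactness).\<close>
definition q_spec :: "nat \<Rightarrow> 'a set \<Rightarrow> 'a set set \<Rightarrow> real" where
  "q_spec r V E = Sup {slap_form r V E x | x. rnorm r V x = 1}"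

end

theory Submission
  imports Defs
begin

text \<open>Given x with unit r-norm, put y v = \<bar>x v\<bar> powr (r / s), which has unit s-norm.
  Since H is linear, distinct edges share no s-subset, so the s-shadow is the disjoint union of
  the s-subsets of the edges. Hence every vertex has degree binom(r-1, s-1) d(v) in the shadow,
  and the degree terms of the two forms agree up to this factor. For a single edge e,
  AM-GM over its binom(r, s) s-subsets S gives binom(r, s) prod_e \<bar>x\<bar> \<le> sum_S prod_S y,
  and r binom(r-1, s-1) = s binom(r, s) turns this into the same comparison of the edge terms.
  So binom(r-1, s-1) times the form of H at x is at most the form of the shadow at y.\<close>

definition k_subsets :: "nat \<Rightarrow> 'a set \<Rightarrow> 'a set set" where
  "k_subsets k A = {S. S \<subseteq> A \<and> card S = k}"

lemma finite_k_subsets: "finite A \<Longrightarrow> finite (k_subsets k A)"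
  unfolding k_subsets_def by (rule finite_subset[of _ "Pow A"]) auto

lemma card_k_subsets: "finite A \<Longrightarrow> card (k_subsets k A) = card A choose k"
  unfolding k_subsets_def by (rule n_subsets)

lemma k_subsets_containing:
  assumes "finite A" "v \<in> A" "0 < k"
  shows "{S \<in> k_subsets k A. v \<in> S} = insert v ` k_subsets (k - 1) (A - {v})"
proof (intro equalityI subsetI)
  fix S assume S: "S \<in> {S \<in> k_subsets k A. v \<in> S}"
  then have "finite S" using assms(1) finite_subset unfolding k_subsets_def by auto
  with S have "S - {v} \<in> k_subsets (k - 1) (A - {v})" unfolding k_subsets_def by auto
  moreover have "S = insert v (S - {v})" using S by auto
  ultimately show "S \<in> insert v ` k_subsets (k - 1) (A - {v})" by blast
next
  fix S assume "S \<in> insert v ` k_subsets (k - 1) (A - {v})"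
  then obtain B where B: "B \<subseteq> A - {v}" "card B = k - 1" "S = insert v B"
    unfolding k_subsets_def by auto
  then have "finite B" using assms(1) finite_subset by blast
  moreover have "v \<notin> B" using B(1) by blast
  ultimately have "card S = k" using B(2,3) assms(3) by simp
  with B assms show "S \<in> {S \<in> k_subsets k A. v \<in> S}"
    unfolding k_subsets_def by auto
qed

lemma hdegree_k_subsets:
  assumes "finite A" "v \<in> A" "0 < k"
  shows "hdegree (k_subsets k A) v = (card A - 1) choose (k - 1)"
proof -
  have "inj_on (insert v) (k_subsets (k - 1) (A - {v}))"
    unfolding k_subsets_def by (rule inj_onI) blast
  then have "hdegree (k_subsets k A) v = card (k_subsets (k - 1) (A - {v}))"
    unfolding hdegree_def k_subsets_containing[OF assms] by (rule card_image)
  also have "\<dots> = (card A - 1) choose (k - 1)"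
    using assms by (simp add: card_k_subsets)
  finally show ?thesis .
qed

lemma sum_hdegree_mult:
  assumes "finite V" "finite F" "\<forall>S\<in>F. S \<subseteq> V"
  shows "(\<Sum>v\<in>V. real (hdegree F v) * w v) = (\<Sum>S\<in>F. \<Sum>v\<in>S. w v)"
proof -
  have "(\<Sum>S\<in>F. \<Sum>v\<in>S. w v) = (\<Sum>S\<in>F. \<Sum>v\<in>{v. v \<in> V \<and> v \<in> S}. w v)"
    using assms(3) by (intro sum.cong) auto
  also have "\<dots> = (\<Sum>v\<in>V. \<Sum>S\<in>{S. S \<in> F \<and> v \<in> S}. w v)"
    using assms(2,1) by (rule sum.swap_restrict)
  finally show ?thesis by (simp add: hdegree_def)
qed

lemma sum_k_subsets_sum:
  assumes "finite A" "0 < k"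
  shows "(\<Sum>S\<in>k_subsets k A. \<Sum>v\<in>S. w v)
         = real ((card A - 1) choose (k - 1)) * (\<Sum>v\<in>A. w v)"
proof -
  have "(\<Sum>S\<in>k_subsets k A. \<Sum>v\<in>S. w v) = (\<Sum>v\<in>A. real (hdegree (k_subsets k A) v) * w v)"
    using assms(1) finite_k_subsets by (intro sum_hdegree_mult[symmetric]) (auto simp: k_subsets_def)
  also have "\<dots> = (\<Sum>v\<in>A. real ((card A - 1) choose (k - 1)) * w v)"
    using assms by (intro sum.cong) (auto simp: hdegree_k_subsets)
  finally show ?thesis by (simp add: sum_distrib_left)
qed

lemma card_mult_exp_mean_le_sum_exp:
  fixes a :: "'i \<Rightarrow> real"
  assumes "finite I"
  shows "real (card I) * exp ((\<Sum>i\<in>I. a i) / card I) \<le> (\<Sum>i\<in>I. exp (a i))"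
proof (cases "I = {}")
  case False
  define m where "m = (\<Sum>i\<in>I. a i) / card I"
  have "card I > 0" using assms False by (simp add: card_gt_0_iff)
  then have "(\<Sum>i\<in>I. a i - m) = 0" by (simp add: sum_subtractf m_def)
  then have "real (card I) * exp m = (\<Sum>i\<in>I. exp m * (1 + (a i - m)))"
    by (simp add: sum_distrib_left[symmetric] sum.distrib)
  also have "\<dots> \<le> (\<Sum>i\<in>I. exp (a i))"
  proof (rule sum_mono)
    fix i
    have "exp m * (1 + (a i - m)) \<le> exp m * exp (a i - m)" by simp
    then show "exp m * (1 + (a i - m)) \<le> exp (a i)" by (simp add: exp_diff)
  qed
  finally show ?thesis by (simp add: m_def)
qed simp

lemma choose_mult_prod_le_sum_prod_powr:
  fixes z :: "'a \<Rightarrow> real"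
  assumes e: "finite e" "card e = r" and s: "0 < s" "s \<le> r" and z: "\<forall>v\<in>e. 0 \<le> z v"
  shows "real (r choose s) * (\<Prod>v\<in>e. z v)
         \<le> (\<Sum>S\<in>k_subsets s e. \<Prod>v\<in>S. z v powr (real r / real s))"
proof (cases "\<exists>v\<in>e. z v = 0")
  case True
  then have "(\<Prod>v\<in>e. z v) = 0" using e by auto
  then show ?thesis by (simp add: sum_nonneg prod_nonneg)
next
  case False
  with z have pos: "\<forall>v\<in>e. 0 < z v" by force
  define N where "N = real (r choose s)"
  define a where "a S = real r / real s * (\<Sum>v\<in>S. ln (z v))" for S
  have card: "real (card (k_subsets s e)) = N"
    using e by (simp add: N_def card_k_subsets)
  have "N > 0" using s unfolding N_def by simp
  have "real r / real s * real ((r - 1) choose (s - 1)) = N"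
    using times_binomial_minus1_eq[OF s(1), of r] s(1) unfolding N_def
    by (simp add: field_simps flip: of_nat_mult)
  moreover have "(\<Sum>S\<in>k_subsets s e. a S)
      = real r / real s * real ((r - 1) choose (s - 1)) * (\<Sum>v\<in>e. ln (z v))"
    unfolding a_def sum_distrib_left[symmetric] sum_k_subsets_sum[OF e(1) s(1)] e(2) by simp
  ultimately have "(\<Sum>S\<in>k_subsets s e. a S) = N * (\<Sum>v\<in>e. ln (z v))" by simp
  then have "exp ((\<Sum>S\<in>k_subsets s e. a S) / card (k_subsets s e)) = (\<Prod>v\<in>e. z v)"
    using card \<open>N > 0\<close> pos e by (simp add: exp_sum)
  moreover have "exp (a S) = (\<Prod>v\<in>S. z v powr (real r / real s))" if "S \<in> k_subsets s e" for S
  proof -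
    have S: "S \<subseteq> e" "finite S" using that e(1) finite_subset unfolding k_subsets_def by auto
    then have "exp (a S) = (\<Prod>v\<in>S. exp (real r / real s * ln (z v)))"
      unfolding a_def sum_distrib_left by (simp add: exp_sum)
    also have "\<dots> = (\<Prod>v\<in>S. z v powr (real r / real s))"
      using S(1) pos by (intro prod.cong) (force simp: powr_def mult.commute)+
    finally show ?thesis .
  qed
  ultimately show ?thesis
    using card_mult_exp_mean_le_sum_exp[OF finite_k_subsets[OF e(1)], of s a] card
    by (simp add: N_def)
qed

lemma uniform_hypergraph_finite_edges: "uniform_hypergraph r V E \<Longrightarrow> finite E"
  unfolding uniform_hypergraph_def by (rule finite_subset[of _ "Pow V"]) auto

lemma uniform_hypergraph_shadow:
  "uniform_hypergraph r V E \<Longrightarrow> uniform_hypergraph s V (shadow s E)"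
  unfolding uniform_hypergraph_def shadow_def by auto

lemma shadow_eq_UN_k_subsets: "shadow s E = (\<Union>e\<in>E. k_subsets s e)"
  unfolding shadow_def k_subsets_def by auto

lemma disjoint_k_subsets_if_linear:
  assumes "linear_hypergraph E" "2 \<le> s" "e \<in> E" "f \<in> E" "e \<noteq> f" "finite e"
  shows "k_subsets s e \<inter> k_subsets s f = {}"
proof (rule ccontr)
  assume "k_subsets s e \<inter> k_subsets s f \<noteq> {}"
  then obtain S where "S \<subseteq> e \<inter> f" "card S = s" unfolding k_subsets_def by auto
  then have "s \<le> card (e \<inter> f)" using assms(6) by (metis card_mono finite_Int)
  moreover have "card (e \<inter> f) \<le> 1" using assms(1,3-5) unfolding linear_hypergraph_def by blast
  ultimately show False using assms(2) by simp
qed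

lemma sum_shadow_linear:
  assumes "uniform_hypergraph r V E" "linear_hypergraph E" "2 \<le> s"
  shows "(\<Sum>S\<in>shadow s E. g S) = (\<Sum>e\<in>E. \<Sum>S\<in>k_subsets s e. g S)"
proof -
  have fin: "\<forall>e\<in>E. finite e" using assms(1) finite_subset unfolding uniform_hypergraph_def by blast
  show ?thesis
    unfolding shadow_eq_UN_k_subsets
    using uniform_hypergraph_finite_edges[OF assms(1)] fin finite_k_subsets
      disjoint_k_subsets_if_linear[OF assms(2,3)]
    by (intro sum.UNION_disjoint) auto
qed

lemma hdegree_shadow_linear:
  assumes "uniform_hypergraph r V E" "linear_hypergraph E" "2 \<le> s"
  shows "hdegree (shadow s E) v = ((r - 1) choose (s - 1)) * hdegree E v"
proof -
  have hdegree_sum: "hdegree F v = (\<Sum>S\<in>F. if v \<in> S then 1 else 0)" if "finite F" for F :: "'a set set"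
    using that by (simp add: hdegree_def sum.inter_filter[symmetric])
  have fin: "finite (shadow s E)" "finite E"
    using assms(1) uniform_hypergraph_shadow uniform_hypergraph_finite_edges by blast+
  have edges: "finite e" "card e = r" if "e \<in> E" for e
    using assms(1) that finite_subset unfolding uniform_hypergraph_def by auto
  have "hdegree (shadow s E) v = (\<Sum>e\<in>E. \<Sum>S\<in>k_subsets s e. if v \<in> S then 1 else 0)"
    using fin by (simp add: hdegree_sum sum_shadow_linear[OF assms])
  also have "\<dots> = (\<Sum>e\<in>E. hdegree (k_subsets s e) v)"
    using edges by (intro sum.cong) (simp_all add: hdegree_sum finite_k_subsets)
  also have "\<dots> = (\<Sum>e\<in>E. if v \<in> e then (r - 1) choose (s - 1) else 0)"
  proof (rule sum.cong[OF refl])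
    fix e assume "e \<in> E"
    show "hdegree (k_subsets s e) v = (if v \<in> e then (r - 1) choose (s - 1) else 0)"
      using edges[OF \<open>e \<in> E\<close>] assms(3)
      by (auto simp: hdegree_k_subsets) (auto simp: hdegree_def k_subsets_def)
  qed
  also have "\<dots> = ((r - 1) choose (s - 1)) * hdegree E v"
    using fin by (simp add: hdegree_def sum.inter_filter[symmetric])
  finally show ?thesis .
qed

lemma powr_divide_power:
  fixes z :: real
  assumes "0 \<le> z" "0 < s" "0 < r"
  shows "(z powr (real r / real s)) ^ s = z ^ r"
proof (cases "z = 0")
  case False
  then have "(z powr (real r / real s)) ^ s = z powr (real s * (real r / real s))"
    by (rule powr_power)
  also have "\<dots> = z ^ r" using assms by (simp add: powr_realpow')
  finally show ?thesis .
qed (use assms in \<open>simp add: zero_power\<close>)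

lemma choose_mult_slap_form_le_shadow:
  fixes z :: "'a \<Rightarrow> real"
  assumes U: "uniform_hypergraph r V E" and L: "linear_hypergraph E"
    and s: "2 \<le> s" "s \<le> r" and z: "\<forall>v. 0 \<le> z v"
  shows "real ((r - 1) choose (s - 1)) * slap_form r V E z
         \<le> slap_form s V (shadow s E) (\<lambda>v. z v powr (real r / real s))"
proof -
  define y where "y v = z v powr (real r / real s)" for v
  define C where "C = real ((r - 1) choose (s - 1))"
  have edge: "finite e" "card e = r" if "e \<in> E" for e
    using U that finite_subset unfolding uniform_hypergraph_def by auto
  have degrees: "(\<Sum>v\<in>V. real (hdegree (shadow s E) v) * y v ^ s)
      = C * (\<Sum>v\<in>V. real (hdegree E v) * z v ^ r)"
    using z s by (simp add: hdegree_shadow_linear[OF U L s(1)] y_def C_def powr_divide_power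
        sum_distrib_left mult.assoc)
  have "real r * C = real s * real (r choose s)"
    using times_binomial_minus1_eq[of s r] s unfolding C_def by (simp flip: of_nat_mult)
  then have "real r * C * (\<Sum>e\<in>E. \<Prod>v\<in>e. z v)
      = real s * (\<Sum>e\<in>E. real (r choose s) * (\<Prod>v\<in>e. z v))"
    by (simp add: sum_distrib_left mult.assoc)
  also have "\<dots> \<le> real s * (\<Sum>e\<in>E. \<Sum>S\<in>k_subsets s e. \<Prod>v\<in>S. y v)"
    using edge s z unfolding y_def
    by (intro mult_left_mono sum_mono choose_mult_prod_le_sum_prod_powr) auto
  also have "\<dots> = real s * (\<Sum>S\<in>shadow s E. \<Prod>v\<in>S. y v)"
    by (simp add: sum_shadow_linear[OF U L s(1)])
  finally show ?thesis
    using degrees unfolding slap_form_def y_def C_def by (simp add: algebra_simps)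
qed

lemma slap_form_le_abs: "slap_form r V E x \<le> slap_form r V E (\<lambda>v. \<bar>x v\<bar>)"
  unfolding slap_form_def
  by (intro add_mono mult_left_mono sum_mono) (simp_all flip: power_abs abs_prod)

lemma rnorm_powr_abs:
  assumes "0 < r" "0 < s" "rnorm r V x = 1"
  shows "rnorm s V (\<lambda>v. \<bar>x v\<bar> powr (real r / real s)) = 1"
  using assms by (simp add: rnorm_def powr_divide_power)

lemma abs_le_one_if_rnorm_eq_one:
  assumes "rnorm t V y = 1" "0 < t" "finite V" "v \<in> V"
  shows "\<bar>y v\<bar> \<le> 1"
proof -
  have "\<bar>y v\<bar> ^ t \<le> (\<Sum>v\<in>V. \<bar>y v\<bar> ^ t)"
    using assms(3,4) by (intro member_le_sum) auto
  also have "\<dots> = 1" using assms(1,2) unfolding rnorm_def by simp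
  finally show ?thesis using assms(2) by (simp add: power_le_one_iff)
qed

lemma slap_form_le_q_spec:
  assumes U: "uniform_hypergraph t V F" and t: "0 < t" and y: "rnorm t V y = 1"
  shows "slap_form t V F y \<le> q_spec t V F"
  unfolding q_spec_def
proof (rule cSup_upper)
  show "slap_form t V F y \<in> {slap_form t V F x |x. rnorm t V x = 1}" using y by blast
  have V: "finite V" and F: "\<forall>S\<in>F. S \<subseteq> V" using U unfolding uniform_hypergraph_def by auto
  have "slap_form t V F x \<le> (\<Sum>v\<in>V. real (hdegree F v)) + real t * real (card F)"
    if x: "rnorm t V x = 1" for x
  proof -
    have x1: "\<bar>x v\<bar> \<le> 1" if "v \<in> V" for v
      using abs_le_one_if_rnorm_eq_one[OF x t V that] .
    have "x v ^ t \<le> 1" if "v \<in> V" for v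
    proof -
      have "x v ^ t \<le> \<bar>x v\<bar> ^ t" by (metis abs_ge_self power_abs)
      also have "\<dots> \<le> 1" using x1[OF that] by (simp add: power_le_one)
      finally show ?thesis .
    qed
    then have "(\<Sum>v\<in>V. real (hdegree F v) * x v ^ t) \<le> (\<Sum>v\<in>V. real (hdegree F v))"
      by (intro sum_mono mult_left_le) auto
    moreover have "(\<Prod>v\<in>S. x v) \<le> 1" if "S \<in> F" for S
    proof -
      have "(\<Prod>v\<in>S. x v) \<le> (\<Prod>v\<in>S. \<bar>x v\<bar>)" by (metis abs_ge_self abs_prod)
      also have "\<dots> \<le> 1" using x1 F that by (intro prod_le_1) auto
      finally show ?thesis .
    qed
    then have "(\<Sum>S\<in>F. \<Prod>v\<in>S. x v) \<le> real (card F)"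
      using sum_mono[of F "\<lambda>S. \<Prod>v\<in>S. x v" "\<lambda>_. 1"] by simp
    ultimately show ?thesis
      unfolding slap_form_def by (simp add: mult_left_mono add_mono)
  qed
  then show "bdd_above {slap_form t V F x |x. rnorm t V x = 1}"
    by (intro bdd_aboveI) blast
qed

lemma q_spec_least:
  assumes "finite V" "V \<noteq> {}" "0 < r"
    and "\<And>x. rnorm r V x = 1 \<Longrightarrow> slap_form r V E x \<le> B"
  shows "q_spec r V E \<le> B"
  unfolding q_spec_def
proof (rule cSup_least)
  obtain v0 where "v0 \<in> V" using assms(2) by blast
  moreover have "(\<Sum>v\<in>V. \<bar>if v = v0 then 1 else 0\<bar> ^ r) = (\<Sum>v\<in>V. if v = v0 then 1 else 0 :: real)"
    using assms(3) by (intro sum.cong) auto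
  ultimately have "rnorm r V (\<lambda>v. if v = v0 then 1 else 0) = 1"
    using assms(1,3) by (simp add: rnorm_def)
  then show "{slap_form r V E x |x. rnorm r V x = 1} \<noteq> {}" by blast
qed (use assms(4) in blast)

lemma q_spec_le_shadow_div_choose:
  assumes U: "uniform_hypergraph r V E" and L: "linear_hypergraph E"
    and s: "2 \<le> s" "s \<le> r" and V: "V \<noteq> {}"
  shows "q_spec r V E \<le> q_spec s V (shadow s E) / real ((r - 1) choose (s - 1))"
proof (rule q_spec_least)
  define C where "C = real ((r - 1) choose (s - 1))"
  have "C > 0" using s unfolding C_def by simp
  fix x assume x: "rnorm r V x = 1"
  define y where "y v = \<bar>x v\<bar> powr (real r / real s)" for v
  have "C * slap_form r V E x \<le> C * slap_form r V E (\<lambda>v. \<bar>x v\<bar>)"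
    using \<open>C > 0\<close> slap_form_le_abs by simp
  also have "\<dots> \<le> slap_form s V (shadow s E) y"
    unfolding C_def y_def using choose_mult_slap_form_le_shadow[OF U L s] by simp
  also have "\<dots> \<le> q_spec s V (shadow s E)"
    unfolding y_def using s x
    by (intro slap_form_le_q_spec uniform_hypergraph_shadow[OF U] rnorm_powr_abs) auto
  finally show "slap_form r V E x \<le> q_spec s V (shadow s E) / C"
    using \<open>C > 0\<close> by (simp add: pos_le_divide_eq mult.commute)
qed (use U V s in \<open>auto simp: uniform_hypergraph_def\<close>)

theorem lemma8p1:
  fixes V :: "'a set" and E :: "'a set set" and r s :: nat
  assumes "r \<ge> 2" and "2 \<le> s" and "s \<le> r"
    and "V \<noteq> {}"
    and "uniform_hypergraph r V E" and "linear_hypergraph E"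
  shows "q_spec r V E \<le> q_spec s V (shadow s E) / real ((r - 1) choose (s - 1))
         \<and> real (r - 1) * q_spec r V E \<le> q_spec 2 V (shadow 2 E)"
proof
  show "q_spec r V E \<le> q_spec s V (shadow s E) / real ((r - 1) choose (s - 1))"
    using q_spec_le_shadow_div_choose[OF assms(5,6,2,3,4)] .
  have "q_spec r V E \<le> q_spec 2 V (shadow 2 E) / real (r - 1)"
    using q_spec_le_shadow_div_choose[OF assms(5,6) _ assms(1,4)] by simp
  moreover have "real (r - 1) > 0" using assms(1) by simp
  ultimately show "real (r - 1) * q_spec r V E \<le> q_spec 2 V (shadow 2 E)"
    by (simp add: pos_le_divide_eq mult.commute)
qed

end
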